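(* Consider binary classification: $(x,y)$ is drawn from a data distribution with label $y\in\{0,1\}$, and a victim model outputs $\hat p(x)\in[0,1]$, its predicted probability of class $1$ (the watermark target class). Assume $\hat p$ is calibrated, i.e. $\mathbb{E}[y\mid \hat p(x)=a]=a$ for all $0\le a\le 1$. Let $\varepsilon\ge 0$ be the watermark level, $f_w\in\mathbb{R}$ a frequency, and $z(x)=\cos\left(f_w\, g(\mathbf{v}_k,x,\mathbf{M})\right)\in[-1,1]$, where $g(\mathbf{v}_k,x,\mathbf{M})\in[0,1)$ is a hash value determined by the random watermark key. Let $\tau\in[0,1]$ be the data selection ratio: under the randomness of the key, each input $x$ is selected for watermarking with probability $\tau$, independently of everything else. Define: - $\mathrm{Acc}(\text{Victim})=\mathbb{P}\big(\mathbb{1}\{\hat p(x)>0.5\}=y\big)$; - the argmax soft label: on a selected input, $\hat y_s=\mathbb{1}\left\{\frac{\hat p(x)+\varepsilon(1+z(x))}{1+2\varepsilon}>0.5\right\}$, and on a non-selected input $\hat y_s=\mathbb{1}\{\hat p(x)>0.5\}$, with $\mathrm{Acc}(\text{Argmax Soft})=\mathbb{P}(\hat y_s=y)$; - the sampling hard label: on a selected input, $\hat y_h\sim\mathrm{Ber}\left(\frac{\hat p(x)+\varepsilon(1+z(x))}{1+2\varepsilon}\right)$, drawn conditionally independently of $y$ given $x$, and on a non-selected input $\hat y_h=\mathbb{1}\{\hat p(x)>0.5\}$, with $\mathrm{Acc}(\text{Sampling Hard})=\mathbb{P}(\hat y_h=y)$. Then, with expectations over the random watermark key, $$\mathbb{E}\left[\mathrm{Acc}(\text{Argmax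 Soft})\right]\ \ge\ \mathrm{Acc}(\text{Victim})-\tau(0.5+\varepsilon)\,\mathbb{P}\left[0.5-\varepsilon\le \hat p(x)\le 0.5+\varepsilon\right],$$ $$\mathbb{E}\left[\mathrm{Acc}(\text{Sampling Hard})\right]\ \ge\ (1-\tau)\,\mathrm{Acc}(\text{Victim})+\frac{\tau}{1+2\varepsilon}\,\mathbb{E}\left[2\hat p(x)^2-2\hat p(x)+1\right].$$
   Context: This is the setting of a watermarking scheme for a classification API. The watermark key is random: $\mathbf{v}_k,\mathbf{v}_s\in\mathbb{R}^n$ have i.i.d. $\mathcal{U}[0,1)$ entries and $\mathbf{M}$ has i.i.d. $\mathcal{N}(0,1)$ entries; $g(\mathbf{v},x,\mathbf{M})\in[0,1)$ denotes a hash of the input $x$ obtained from $\mathbf{v}^\top\mathbf{M}_{i(x)}$ (where $\mathbf{M}_{i(x)}$ is the row of $\mathbf{M}$ indexed by a token of $x$) via the probability integral transform. An input $x$ is selected for watermarking when $g(\mathbf{v}_s,x,\mathbf{M})\le\tau$; the paper models this as each input being selected with probability $\tau$ independently of everything else. On selected inputs the victim's class-1 probability $\hat p$ is replaced by $\frac{\hat p+\varepsilon(1+z(x))}{1+2\varepsilon}$. The "argmax soft" output is the argmax of the (possibly watermarked) probabilities; the "sampling hard" output is a one-hot label sampled from the watermarked probabilities. *)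

theory Defs
  imports "HOL-Probability.Probability"
begin

text \<open>Data distribution D on pairs (x, y) with x an input (in the measurable
space X) and y :: bool the label (True = class 1, the watermark target class).
phat x is the victim's predicted probability of class 1.
The random watermark key k is drawn from the probability space K.\<close>

text \<open>Calibration E[y | phat(x)] = phat(x), written out via the defining
property of conditional expectation w.r.t. the sigma-algebra generated by phat.\<close>
definition calibrated :: "('x \<times> bool) measure \<Rightarrow> ('x \<Rightarrow> real) \<Rightarrow> bool" where
  "calibrated D phat \<longleftrightarrow>
     (\<forall>B \<in> sets borel.
        (\<integral>w. of_bool (snd w) * indicator B (phat (fst w)) \<partial>D) =
        (\<integral>w. phat (fst w) * indicator B (phat (fst w)) \<partial>D))"

definition wm_prob :: "real \<Rightarrow> real \<Rightarrow> real \<Rightarrow> real" where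
  "wm_prob eps p zv = (p + eps * (1 + zv)) / (1 + 2 * eps)"

definition zwm :: "real \<Rightarrow> ('k \<Rightarrow> 'x \<Rightarrow> real) \<Rightarrow> 'k \<Rightarrow> 'x \<Rightarrow> real" where
  "zwm fw g k x = cos (fw * g k x)"

definition victim_label :: "('x \<Rightarrow> real) \<Rightarrow> 'x \<Rightarrow> bool" where
  "victim_label phat x = (phat x > 1/2)"

definition acc_victim :: "('x \<times> bool) measure \<Rightarrow> ('x \<Rightarrow> real) \<Rightarrow> real" where
  "acc_victim D phat = measure D {w \<in> space D. victim_label phat (fst w) = snd w}"

definition argmax_soft_label ::
  "real \<Rightarrow> real \<Rightarrow> ('k \<Rightarrow> 'x \<Rightarrow> real) \<Rightarrow> ('k \<Rightarrow> 'x \<Rightarrow> bool) \<Rightarrow> ('x \<Rightarrow> real) \<Rightarrow> 'k \<Rightarrow> 'x \<Rightarrow> bool" where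
  "argmax_soft_label eps fw g sel phat k x =
     (if sel k x then wm_prob eps (phat x) (zwm fw g k x) > 1/2 else victim_label phat x)"

definition acc_argmax_soft ::
  "('x \<times> bool) measure \<Rightarrow> real \<Rightarrow> real \<Rightarrow> ('k \<Rightarrow> 'x \<Rightarrow> real) \<Rightarrow> ('k \<Rightarrow> 'x \<Rightarrow> bool) \<Rightarrow> ('x \<Rightarrow> real) \<Rightarrow> 'k \<Rightarrow> real" where
  "acc_argmax_soft D eps fw g sel phat k =
     measure D {w \<in> space D. argmax_soft_label eps fw g sel phat k (fst w) = snd w}"

definition sampling_hard_dist ::
  "real \<Rightarrow> real \<Rightarrow> ('k \<Rightarrow> 'x \<Rightarrow> real) \<Rightarrow> ('k \<Rightarrow> 'x \<Rightarrow> bool) \<Rightarrow> ('x \<Rightarrow> real) \<Rightarrow> 'k \<Rightarrow> 'x \<Rightarrow> bool pmf" where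
  "sampling_hard_dist eps fw g sel phat k x =
     (if sel k x then bernoulli_pmf (wm_prob eps (phat x) (zwm fw g k x))
      else return_pmf (victim_label phat x))"

text \<open>P(yh = y) for key k, where yh ~ sampling_hard_dist independently of y given x.\<close>
definition acc_sampling_hard ::
  "('x \<times> bool) measure \<Rightarrow> real \<Rightarrow> real \<Rightarrow> ('k \<Rightarrow> 'x \<Rightarrow> real) \<Rightarrow> ('k \<Rightarrow> 'x \<Rightarrow> bool) \<Rightarrow> ('x \<Rightarrow> real) \<Rightarrow> 'k \<Rightarrow> real" where
  "acc_sampling_hard D eps fw g sel phat k =
     (\<integral>w. measure_pmf.prob (sampling_hard_dist eps fw g sel phat k (fst w)) {snd w} \<partial>D)"

end

theory Submission
  imports Defs
begin

(* Whatever the value of z in [-1, 1], the watermarked probability (p + eps (1 + z)) / (1 + 2 eps)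
   lies between p / (1 + 2 eps) and (p + 2 eps) / (1 + 2 eps). Hence on a selected input the argmax
   label can differ from the victim's only when p is within eps of 1/2, and the sampled label equals
   y with probability at least (p if y else 1 - p) / (1 + 2 eps). These bounds hold for every key,
   so averaging over the key only uses that each input is selected with probability tau (Fubini).
   Calibration says that y given p is Bernoulli(p): the mass where the victim is correct and p lies
   in the band is E[max(p, 1 - p); band] <= (1/2 + eps) P(band), and E[p if y else 1 - p] is
   E[p^2 + (1 - p)^2]. *)

lemma measure_Collect_eq_integral:
  "measure M {x \<in> space M. P x} = (\<integral>x. of_bool (P x) \<partial>M)"
proof -
  have "measure M {x \<in> space M. P x} = (\<integral>x. indicator {x \<in> space M. P x} x \<partial>M)"
    by (simp add: Int_absorb2 subset_iff)
  also have "\<dots> = (\<integral>x. of_bool (P x) \<partial>M)"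
    by (rule Bochner_Integration.integral_cong) (auto simp: indicator_def)
  finally show ?thesis .
qed

lemma (in finite_measure) integrable_bounded:
  fixes f :: "'a \<Rightarrow> real"
  assumes "f \<in> borel_measurable M" "\<And>x. x \<in> space M \<Longrightarrow> \<bar>f x\<bar> \<le> B"
  shows "integrable M f"
  using assms by (intro integrable_const_bound[where B = B]) auto

(* Calibration says that the measures with densities 1{y} and p on D have the same image under p. *)
lemma calibrated_integral_mult:
  fixes D :: "('x \<times> bool) measure" and phat :: "'x \<Rightarrow> real" and h :: "real \<Rightarrow> real"
  assumes "finite_measure D" and calib: "calibrated D phat"
    and [measurable]: "(\<lambda>w. phat (fst w)) \<in> borel_measurable D" "snd \<in> measurable D (count_space UNIV)"
    and phat_range: "\<And>w. w \<in> space D \<Longrightarrow> 0 \<le> phat (fst w) \<and> phat (fst w) \<le> 1"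
    and [measurable]: "h \<in> borel_measurable borel"
  shows "(\<integral>w. of_bool (snd w) * h (phat (fst w)) \<partial>D) = (\<integral>w. phat (fst w) * h (phat (fst w)) \<partial>D)"
proof -
  interpret finite_measure D by fact
  define q where "q w = phat (fst w)" for w :: "'x \<times> bool"
  define Y where "Y w = (of_bool (snd w) :: real)" for w :: "'x \<times> bool"
  have [measurable]: "q \<in> borel_measurable D" "Y \<in> borel_measurable D"
    unfolding q_def Y_def by measurable
  have law: "emeasure (distr (density D f) borel q) B = ennreal (\<integral>w. f w * indicator B (q w) \<partial>D)"
    if [measurable]: "f \<in> borel_measurable D" "B \<in> sets borel"
      and f_range: "\<And>w. w \<in> space D \<Longrightarrow> 0 \<le> f w \<and> f w \<le> 1" for f B
  proof -
    have "emeasure (distr (density D f) borel q) B = emeasure (density D f) (q -` B \<inter> space D)"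
      by (subst emeasure_distr) auto
    also have "\<dots> = (\<integral>\<^sup>+w. ennreal (f w * indicator B (q w)) \<partial>D)"
      by (subst emeasure_density) (auto intro!: nn_integral_cong simp: indicator_def)
    also have "\<dots> = ennreal (\<integral>w. f w * indicator B (q w) \<partial>D)"
      using f_range
      by (intro nn_integral_eq_integral integrable_bounded[where B = 1] AE_I2)
         (auto simp: indicator_def)
    finally show ?thesis .
  qed
  have "distr (density D Y) borel q = distr (density D q) borel q"
  proof (rule measure_eqI)
    fix B assume "B \<in> sets (distr (density D Y) borel q)"
    then have [measurable]: "B \<in> sets borel" by simp
    show "emeasure (distr (density D Y) borel q) B = emeasure (distr (density D q) borel q) B"
      using calib phat_range
      by (simp add: law Y_def q_def calibrated_def)
  qed simp
  then have "integral\<^sup>L (distr (density D Y) borel q) h = integral\<^sup>L (distr (density D q) borel q) h"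
    by simp
  then show ?thesis
    using phat_range
    by (simp add: integral_distr integral_density Y_def q_def)
qed

lemma calibrated_integral_label:
  fixes D :: "('x \<times> bool) measure" and phat :: "'x \<Rightarrow> real" and \<phi> :: "real \<Rightarrow> bool \<Rightarrow> real"
  assumes "finite_measure D" and calib: "calibrated D phat"
    and [measurable]: "(\<lambda>w. phat (fst w)) \<in> borel_measurable D" "snd \<in> measurable D (count_space UNIV)"
    and phat_range: "\<And>w. w \<in> space D \<Longrightarrow> 0 \<le> phat (fst w) \<and> phat (fst w) \<le> 1"
    and [measurable]: "\<And>b. (\<lambda>t. \<phi> t b) \<in> borel_measurable borel"
    and int: "\<And>b. integrable D (\<lambda>w. \<phi> (phat (fst w)) b)"
  shows "(\<integral>w. \<phi> (phat (fst w)) (snd w) \<partial>D)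
       = (\<integral>w. phat (fst w) * \<phi> (phat (fst w)) True + (1 - phat (fst w)) * \<phi> (phat (fst w)) False \<partial>D)"
proof -
  define h where "h t = \<phi> t True - \<phi> t False" for t
  have [measurable]: "h \<in> borel_measurable borel"
    unfolding h_def by measurable
  have int_h: "integrable D (\<lambda>w. h (phat (fst w)))"
    unfolding h_def using int by auto
  have int_mult: "integrable D (\<lambda>w. c w * h (phat (fst w)))"
    if [measurable]: "c \<in> borel_measurable D" and c: "\<And>w. w \<in> space D \<Longrightarrow> \<bar>c w\<bar> \<le> 1" for c
    by (rule Bochner_Integration.integrable_bound[OF int_h]) (auto intro!: AE_I2 mult_left_le_one_le simp: abs_mult c)
  have "(\<integral>w. \<phi> (phat (fst w)) (snd w) \<partial>D)
      = (\<integral>w. \<phi> (phat (fst w)) False + of_bool (snd w) * h (phat (fst w)) \<partial>D)"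
    by (intro Bochner_Integration.integral_cong) (auto simp: h_def)
  also have "\<dots> = (\<integral>w. \<phi> (phat (fst w)) False \<partial>D) + (\<integral>w. of_bool (snd w) * h (phat (fst w)) \<partial>D)"
    using int int_mult[of "\<lambda>w. of_bool (snd w)"] by simp
  also have "\<dots> = (\<integral>w. \<phi> (phat (fst w)) False \<partial>D) + (\<integral>w. phat (fst w) * h (phat (fst w)) \<partial>D)"
    using calibrated_integral_mult[OF assms(1-5)] by simp
  also have "\<dots> = (\<integral>w. \<phi> (phat (fst w)) False + phat (fst w) * h (phat (fst w)) \<partial>D)"
    using int int_mult[of "\<lambda>w. phat (fst w)"] phat_range by simp
  also have "\<dots> = (\<integral>w. phat (fst w) * \<phi> (phat (fst w)) True + (1 - phat (fst w)) * \<phi> (phat (fst w)) False \<partial>D)"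
    by (simp add: h_def algebra_simps)
  finally show ?thesis .
qed

lemma (in pair_prob_space) integral_selection_mixture_le:
  fixes F :: "'a \<Rightarrow> 'b \<Rightarrow> real" and sel :: "'a \<Rightarrow> 'b \<Rightarrow> bool" and a b :: "'b \<Rightarrow> real"
  assumes [measurable]: "(\<lambda>(k, w). F k w) \<in> borel_measurable (M1 \<Otimes>\<^sub>M M2)"
    "(\<lambda>(k, w). sel k w) \<in> measurable (M1 \<Otimes>\<^sub>M M2) (count_space UNIV)"
    "a \<in> borel_measurable M2" "b \<in> borel_measurable M2"
    and F_bounded: "\<And>k w. k \<in> space M1 \<Longrightarrow> w \<in> space M2 \<Longrightarrow> \<bar>F k w\<bar> \<le> C"
    and ab_bounded: "\<And>w. w \<in> space M2 \<Longrightarrow> \<bar>a w\<bar> \<le> C \<and> \<bar>b w\<bar> \<le> C"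
    and sel_prob: "\<And>w. w \<in> space M2 \<Longrightarrow> measure M1 {k \<in> space M1. sel k w} = tau"
    and F_ge: "\<And>k w. k \<in> space M1 \<Longrightarrow> w \<in> space M2 \<Longrightarrow> (if sel k w then a w else b w) \<le> F k w"
  shows "(1 - tau) * (\<integral>w. b w \<partial>M2) + tau * (\<integral>w. a w \<partial>M2) \<le> (\<integral>k. (\<integral>w. F k w \<partial>M2) \<partial>M1)"
proof -
  define G where "G k w = (if sel k w then a w else b w)" for k w
  have [measurable]: "(\<lambda>(k, w). G k w) \<in> borel_measurable (M1 \<Otimes>\<^sub>M M2)"
    unfolding G_def by measurable
  have int_F: "integrable (M1 \<Otimes>\<^sub>M M2) (\<lambda>(k, w). F k w)"
    using F_bounded by (intro P.integrable_bounded[where B = C]) (auto simp: space_pair_measure)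
  have int_G: "integrable (M1 \<Otimes>\<^sub>M M2) (\<lambda>(k, w). G k w)"
    using ab_bounded by (intro P.integrable_bounded[where B = C]) (auto simp: G_def space_pair_measure)
  have "(\<integral>k. (\<integral>w. G k w \<partial>M2) \<partial>M1) \<le> (\<integral>k. (\<integral>w. F k w \<partial>M2) \<partial>M1)"
  proof (rule integral_mono[OF integrable_fst[OF int_G] integrable_fst[OF int_F]])
    fix k assume "k \<in> space M1"
    then show "(\<integral>w. G k w \<partial>M2) \<le> (\<integral>w. F k w \<partial>M2)"
      using F_bounded ab_bounded F_ge
      by (intro integral_mono M2.integrable_bounded[where B = C]) (auto simp: G_def)
  qed
  also have "(\<integral>k. (\<integral>w. G k w \<partial>M2) \<partial>M1) = (\<integral>w. (\<integral>k. G k w \<partial>M1) \<partial>M2)"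
    using Fubini_integral[OF int_G] by simp
  also have "\<dots> = (\<integral>w. (1 - tau) * b w + tau * a w \<partial>M2)"
  proof (rule Bochner_Integration.integral_cong[OF refl])
    fix w assume w: "w \<in> space M2"
    have "(\<integral>k. G k w \<partial>M1) = (\<integral>k. b w + of_bool (sel k w) * (a w - b w) \<partial>M1)"
      by (intro Bochner_Integration.integral_cong) (auto simp: G_def)
    also have "\<dots> = b w + (\<integral>k. of_bool (sel k w) \<partial>M1) * (a w - b w)"
      using w by (subst Bochner_Integration.integral_add)
        (auto intro!: M1.integrable_bounded[where B = 1] simp: M1.prob_space)
    also have "\<dots> = (1 - tau) * b w + tau * a w"
      using sel_prob[OF w] by (simp add: measure_Collect_eq_integral[symmetric] algebra_simps)
    finally show "(\<integral>k. G k w \<partial>M1) = (1 - tau) * b w + tau * a w" .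
  qed
  also have "\<dots> = (1 - tau) * (\<integral>w. b w \<partial>M2) + tau * (\<integral>w. a w \<partial>M2)"
    using ab_bounded by (subst Bochner_Integration.integral_add) (auto intro!: M2.integrable_bounded[where B = C])
  finally show ?thesis .
qed

lemma abs_zwm_le_1: "\<bar>zwm fw g k x\<bar> \<le> 1"
  by (simp add: zwm_def)

lemma wm_prob_ge:
  assumes "0 \<le> eps" "\<bar>z\<bar> \<le> 1"
  shows "p / (1 + 2 * eps) \<le> wm_prob eps p z"
  unfolding wm_prob_def using assms by (intro divide_right_mono) auto

lemma one_minus_wm_prob_ge:
  assumes "0 \<le> eps" "\<bar>z\<bar> \<le> 1"
  shows "(1 - p) / (1 + 2 * eps) \<le> 1 - wm_prob eps p z"
proof -
  have "1 - wm_prob eps p z = (1 - p + eps * (1 - z)) / (1 + 2 * eps)"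
    using assms by (simp add: wm_prob_def field_simps)
  then show ?thesis
    using assms by (simp add: divide_right_mono)
qed

lemma wm_prob_in_unit_interval:
  assumes "0 \<le> eps" "\<bar>z\<bar> \<le> 1" "0 \<le> p \<and> p \<le> 1"
  shows "0 \<le> wm_prob eps p z \<and> wm_prob eps p z \<le> 1"
  using wm_prob_ge[OF assms(1,2), of p] one_minus_wm_prob_ge[OF assms(1,2), of p] assms(1,3)
  by (smt (verit) divide_nonneg_nonneg)

lemma wm_prob_gt_half_iff:
  assumes "0 \<le> eps" "\<bar>z\<bar> \<le> 1" "\<not> (1/2 - eps \<le> p \<and> p \<le> 1/2 + eps)"
  shows "1/2 < wm_prob eps p z \<longleftrightarrow> 1/2 < p"
proof -
  have "0 \<le> eps * (1 + z)" "eps * (1 + z) \<le> eps * 2"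
    using assms(1,2) by (auto intro: mult_left_mono)
  moreover have "1/2 < wm_prob eps p z \<longleftrightarrow> (1 + 2 * eps) / 2 < p + eps * (1 + z)"
    using assms(1) by (simp add: wm_prob_def field_simps)
  ultimately show ?thesis
    using assms(3) by (auto simp: algebra_simps)
qed

lemma prob_sampling_hard_dist:
  assumes "0 \<le> eps" "0 \<le> phat x" "phat x \<le> 1"
  shows "measure_pmf.prob (sampling_hard_dist eps fw g sel phat k x) {y} =
    (if sel k x then (if y then wm_prob eps (phat x) (zwm fw g k x) else 1 - wm_prob eps (phat x) (zwm fw g k x))
     else of_bool (victim_label phat x = y))"
proof -
  have "0 \<le> wm_prob eps (phat x) (zwm fw g k x) \<and> wm_prob eps (phat x) (zwm fw g k x) \<le> 1"
    using assms by (intro wm_prob_in_unit_interval abs_zwm_le_1) auto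
  then show ?thesis
    by (auto simp: sampling_hard_dist_def measure_pmf_single)
qed

locale watermark_setting =
  fixes X :: "'x measure" and D :: "('x \<times> bool) measure" and K :: "'k measure"
    and phat :: "'x \<Rightarrow> real" and g :: "'k \<Rightarrow> 'x \<Rightarrow> real" and sel :: "'k \<Rightarrow> 'x \<Rightarrow> bool"
    and eps tau :: real
  assumes D_prob: "prob_space D"
    and D_sets: "sets D = sets (X \<Otimes>\<^sub>M count_space UNIV)"
    and K_prob: "prob_space K"
    and phat_meas[measurable]: "phat \<in> borel_measurable X"
    and phat_range: "\<forall>x \<in> space X. 0 \<le> phat x \<and> phat x \<le> 1"
    and calib: "calibrated D phat"
    and eps_nonneg: "0 \<le> eps"
    and g_meas: "(\<lambda>(k, x). g k x) \<in> borel_measurable (K \<Otimes>\<^sub>M X)"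
    and sel_meas: "(\<lambda>(k, x). sel k x) \<in> measurable (K \<Otimes>\<^sub>M X) (count_space UNIV)"
    and tau_nonneg: "0 \<le> tau"
    and sel_prob: "\<forall>x \<in> space X. measure K {k \<in> space K. sel k x} = tau"
begin

sublocale D: prob_space D
  by (rule D_prob)

sublocale K: prob_space K
  by (rule K_prob)

sublocale KD: pair_prob_space K D
  using K_prob D_prob by (simp add: pair_prob_space_def pair_sigma_finite_def prob_space_imp_sigma_finite)

lemma measurable_fst_D[measurable]: "fst \<in> measurable D X"
  using measurable_cong_sets[OF D_sets refl] measurable_fst by blast

lemma measurable_snd_D[measurable]: "snd \<in> measurable D (count_space UNIV)"
  using measurable_cong_sets[OF D_sets refl] measurable_snd by blast

lemma fst_in_space: "w \<in> space D \<Longrightarrow> fst w \<in> space X"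
  using measurable_space[OF measurable_fst_D] .

lemma phat_range_D: "w \<in> space D \<Longrightarrow> 0 \<le> phat (fst w) \<and> phat (fst w) \<le> 1"
  using phat_range fst_in_space by blast

lemma measurable_key_input: "(\<lambda>(k, w). (k, fst w)) \<in> measurable (K \<Otimes>\<^sub>M D) (K \<Otimes>\<^sub>M X)"
  by measurable

lemma measurable_sel_KD[measurable]: "(\<lambda>(k, w). sel k (fst w)) \<in> measurable (K \<Otimes>\<^sub>M D) (count_space UNIV)"
  using measurable_compose[OF measurable_key_input sel_meas] by (simp add: case_prod_beta')

lemma measurable_g_KD[measurable]: "(\<lambda>(k, w). g k (fst w)) \<in> borel_measurable (K \<Otimes>\<^sub>M D)"
  using measurable_compose[OF measurable_key_input g_meas] by (simp add: case_prod_beta')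

lemma acc_victim_eq_integral:
  "acc_victim D phat = (\<integral>w. of_bool (victim_label phat (fst w) = snd w) \<partial>D)"
  unfolding acc_victim_def by (rule measure_Collect_eq_integral)

lemma integral_correct_in_band_le:
  "(\<integral>w. of_bool (victim_label phat (fst w) = snd w \<and> 1/2 - eps \<le> phat (fst w) \<and> phat (fst w) \<le> 1/2 + eps) \<partial>D)
   \<le> (1/2 + eps) * measure D {w \<in> space D. 1/2 - eps \<le> phat (fst w) \<and> phat (fst w) \<le> 1/2 + eps}"
proof -
  define \<phi> where "\<phi> t b = (of_bool ((1/2 < t) = b \<and> 1/2 - eps \<le> t \<and> t \<le> 1/2 + eps) :: real)" for t b
  have [measurable]: "(\<lambda>t. \<phi> t b) \<in> borel_measurable borel" for b
    unfolding \<phi>_def by measurable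
  have "(\<integral>w. of_bool (victim_label phat (fst w) = snd w \<and> 1/2 - eps \<le> phat (fst w) \<and> phat (fst w) \<le> 1/2 + eps) \<partial>D)
      = (\<integral>w. \<phi> (phat (fst w)) (snd w) \<partial>D)"
    by (simp add: \<phi>_def victim_label_def)
  also have "\<dots> = (\<integral>w. phat (fst w) * \<phi> (phat (fst w)) True + (1 - phat (fst w)) * \<phi> (phat (fst w)) False \<partial>D)"
    using phat_range_D
    by (intro calibrated_integral_label calib D.finite_measure_axioms D.integrable_bounded[where B = 1])
       (auto simp: \<phi>_def)
  also have "\<dots> \<le> (\<integral>w. (1/2 + eps) * of_bool (1/2 - eps \<le> phat (fst w) \<and> phat (fst w) \<le> 1/2 + eps) \<partial>D)"
    using phat_range_D eps_nonneg
    by (intro integral_mono D.integrable_bounded[where B = "1 + eps"]) (auto simp: \<phi>_def)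
  finally show ?thesis
    by (simp add: measure_Collect_eq_integral)
qed

lemma integral_label_likelihood_eq:
  "(\<integral>w. (if snd w then phat (fst w) else 1 - phat (fst w)) \<partial>D)
   = (\<integral>w. 2 * (phat (fst w))\<^sup>2 - 2 * phat (fst w) + 1 \<partial>D)"
proof -
  have "(\<integral>w. (if snd w then phat (fst w) else 1 - phat (fst w)) \<partial>D)
      = (\<integral>w. phat (fst w) * phat (fst w) + (1 - phat (fst w)) * (1 - phat (fst w)) \<partial>D)"
    using phat_range_D
    by (intro calibrated_integral_label[where \<phi> = "\<lambda>t b. if b then t else 1 - t", simplified]
          calib D.finite_measure_axioms D.integrable_bounded[where B = 1])
       (fastforce intro: borel_measurable_if)+
  also have "\<dots> = (\<integral>w. 2 * (phat (fst w))\<^sup>2 - 2 * phat (fst w) + 1 \<partial>D)"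
    by (simp add: power2_eq_square algebra_simps)
  finally show ?thesis .
qed

lemma expected_integral_ge_mixture:
  fixes F :: "'k \<Rightarrow> 'x \<times> bool \<Rightarrow> real" and a b :: "'x \<times> bool \<Rightarrow> real"
  assumes "(\<lambda>(k, w). F k w) \<in> borel_measurable (K \<Otimes>\<^sub>M D)" "a \<in> borel_measurable D" "b \<in> borel_measurable D"
    and "\<And>k w. k \<in> space K \<Longrightarrow> w \<in> space D \<Longrightarrow> \<bar>F k w\<bar> \<le> 1"
    and "\<And>w. w \<in> space D \<Longrightarrow> \<bar>a w\<bar> \<le> 1 \<and> \<bar>b w\<bar> \<le> 1"
    and "\<And>k w. k \<in> space K \<Longrightarrow> w \<in> space D \<Longrightarrow> (if sel k (fst w) then a w else b w) \<le> F k w"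
  shows "(1 - tau) * (\<integral>w. b w \<partial>D) + tau * (\<integral>w. a w \<partial>D) \<le> (\<integral>k. (\<integral>w. F k w \<partial>D) \<partial>K)"
  using assms measurable_sel_KD sel_prob fst_in_space
  by (intro KD.integral_selection_mixture_le[where C = 1 and sel = "\<lambda>k w. sel k (fst w)"]) auto

theorem expected_acc_argmax_soft_ge:
  "acc_victim D phat - tau * (1/2 + eps) *
     measure D {w \<in> space D. 1/2 - eps \<le> phat (fst w) \<and> phat (fst w) \<le> 1/2 + eps}
   \<le> (\<integral>k. acc_argmax_soft D eps fw g sel phat k \<partial>K)"
proof -
  define V where "V w = (of_bool (victim_label phat (fst w) = snd w) :: real)" for w :: "'x \<times> bool"
  define Vb where "Vb w = (of_bool (victim_label phat (fst w) = snd w \<and>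
      1/2 - eps \<le> phat (fst w) \<and> phat (fst w) \<le> 1/2 + eps) :: real)" for w :: "'x \<times> bool"
  have [measurable]: "V \<in> borel_measurable D" "Vb \<in> borel_measurable D"
    unfolding V_def Vb_def victim_label_def by measurable
  have label_eq: "argmax_soft_label eps fw g sel phat k (fst w) = victim_label phat (fst w)"
    if "\<not> (sel k (fst w) \<and> 1/2 - eps \<le> phat (fst w) \<and> phat (fst w) \<le> 1/2 + eps)" for k w
    using that wm_prob_gt_half_iff[OF eps_nonneg abs_zwm_le_1, of "phat (fst w)" fw g k "fst w"]
    by (auto simp: argmax_soft_label_def victim_label_def)
  have "(1 - tau) * (\<integral>w. V w \<partial>D) + tau * (\<integral>w. V w - Vb w \<partial>D)
      \<le> (\<integral>k. acc_argmax_soft D eps fw g sel phat k \<partial>K)"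
    unfolding acc_argmax_soft_def measure_Collect_eq_integral
  proof (rule expected_integral_ge_mixture)
    show "(\<lambda>(k, w). of_bool (argmax_soft_label eps fw g sel phat k (fst w) = snd w) :: real)
        \<in> borel_measurable (K \<Otimes>\<^sub>M D)"
      unfolding argmax_soft_label_def wm_prob_def zwm_def victim_label_def by measurable
    show "(if sel k (fst w) then V w - Vb w else V w)
        \<le> of_bool (argmax_soft_label eps fw g sel phat k (fst w) = snd w)" for k w
      using label_eq[of k w] by (auto simp: V_def Vb_def)
    show "V \<in> borel_measurable D" "(\<lambda>w. V w - Vb w) \<in> borel_measurable D"
      by measurable
  qed (simp_all add: V_def Vb_def)
  moreover have "(\<integral>w. V w - Vb w \<partial>D) = (\<integral>w. V w \<partial>D) - (\<integral>w. Vb w \<partial>D)"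
  proof (rule Bochner_Integration.integral_diff)
    show "integrable D V" "integrable D Vb"
      by (rule D.integrable_bounded[where B = 1], measurable, simp add: V_def Vb_def)+
  qed
  moreover have "tau * (\<integral>w. Vb w \<partial>D) \<le> tau * (1/2 + eps) *
      measure D {w \<in> space D. 1/2 - eps \<le> phat (fst w) \<and> phat (fst w) \<le> 1/2 + eps}"
    using mult_left_mono[OF integral_correct_in_band_le tau_nonneg] by (simp add: Vb_def mult.assoc)
  moreover have "acc_victim D phat = (\<integral>w. V w \<partial>D)"
    unfolding acc_victim_eq_integral V_def ..
  ultimately show ?thesis
    by (simp add: right_diff_distrib left_diff_distrib)
qed

theorem expected_acc_sampling_hard_ge:
  "(1 - tau) * acc_victim D phat
     + tau / (1 + 2 * eps) * (\<integral>w. 2 * (phat (fst w))\<^sup>2 - 2 * phat (fst w) + 1 \<partial>D)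
   \<le> (\<integral>k. acc_sampling_hard D eps fw g sel phat k \<partial>K)"
proof -
  define V where "V w = (of_bool (victim_label phat (fst w) = snd w) :: real)" for w :: "'x \<times> bool"
  define H where "H w = (if snd w then phat (fst w) else 1 - phat (fst w)) / (1 + 2 * eps)"
    for w :: "'x \<times> bool"
  define r where "r k x = wm_prob eps (phat x) (zwm fw g k x)" for k x
  define F where "F k w = (if sel k (fst w) then (if snd w then r k (fst w) else 1 - r k (fst w)) else V w)"
    for k w
  have [measurable]: "V \<in> borel_measurable D" "H \<in> borel_measurable D"
    unfolding V_def H_def victim_label_def by measurable
  have r_range: "0 \<le> r k (fst w) \<and> r k (fst w) \<le> 1" if "w \<in> space D" for k w
    unfolding r_def by (rule wm_prob_in_unit_interval[OF eps_nonneg abs_zwm_le_1 phat_range_D[OF that]])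
  have acc_eq: "acc_sampling_hard D eps fw g sel phat k = (\<integral>w. F k w \<partial>D)" for k
    unfolding acc_sampling_hard_def
    by (rule Bochner_Integration.integral_cong[OF refl])
       (simp add: prob_sampling_hard_dist eps_nonneg phat_range_D F_def r_def V_def)
  have "(1 - tau) * (\<integral>w. V w \<partial>D) + tau * (\<integral>w. H w \<partial>D) \<le> (\<integral>k. (\<integral>w. F k w \<partial>D) \<partial>K)"
  proof (rule expected_integral_ge_mixture)
    show "(\<lambda>(k, w). F k w) \<in> borel_measurable (K \<Otimes>\<^sub>M D)"
      unfolding F_def r_def wm_prob_def zwm_def V_def victim_label_def by measurable
    show "\<bar>F k w\<bar> \<le> 1" if "w \<in> space D" for k w
      using r_range[OF that, of k] by (auto simp: F_def V_def)
    show "\<bar>H w\<bar> \<le> 1 \<and> \<bar>V w\<bar> \<le> 1" if "w \<in> space D" for w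
      using phat_range_D[OF that] eps_nonneg by (auto simp: H_def V_def field_simps)
    show "(if sel k (fst w) then H w else V w) \<le> F k w" for k w
      using wm_prob_ge[OF eps_nonneg abs_zwm_le_1] one_minus_wm_prob_ge[OF eps_nonneg abs_zwm_le_1]
      by (auto simp: H_def F_def r_def)
  qed simp_all
  moreover have "(\<integral>w. H w \<partial>D) = (\<integral>w. 2 * (phat (fst w))\<^sup>2 - 2 * phat (fst w) + 1 \<partial>D) / (1 + 2 * eps)"
    unfolding H_def integral_label_likelihood_eq[symmetric] by simp
  moreover have "acc_victim D phat = (\<integral>w. V w \<partial>D)"
    unfolding acc_victim_eq_integral V_def ..
  ultimately show ?thesis
    by (simp add: acc_eq)
qed

end

theorem theorem1:
  fixes X :: "'x measure" and D :: "('x \<times> bool) measure" and K :: "'k measure"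
    and phat :: "'x \<Rightarrow> real" and g :: "'k \<Rightarrow> 'x \<Rightarrow> real"
    and sel :: "'k \<Rightarrow> 'x \<Rightarrow> bool"
    and eps fw tau :: real
  assumes D_prob: "prob_space D"
    and D_sets: "sets D = sets (X \<Otimes>\<^sub>M count_space UNIV)"
    and K_prob: "prob_space K"
    and phat_meas: "phat \<in> borel_measurable X"
    and phat_range: "\<forall>x \<in> space X. 0 \<le> phat x \<and> phat x \<le> 1"
    and calib: "calibrated D phat"
    and eps_nonneg: "0 \<le> eps"
    and g_meas: "(\<lambda>(k, x). g k x) \<in> borel_measurable (K \<Otimes>\<^sub>M X)"
    and g_range: "\<forall>k \<in> space K. \<forall>x \<in> space X. 0 \<le> g k x \<and> g k x < 1"
    and sel_meas: "(\<lambda>(k, x). sel k x) \<in> measurable (K \<Otimes>\<^sub>M X) (count_space UNIV)"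
    and tau_range: "0 \<le> tau" "tau \<le> 1"
    and sel_prob: "\<forall>x \<in> space X. measure K {k \<in> space K. sel k x} = tau"
    and sel_indep: "\<forall>x \<in> space X.
        prob_space.indep_var K borel (\<lambda>k. of_bool (sel k x) :: real) borel (\<lambda>k. g k x)"
  shows "(\<integral>k. acc_argmax_soft D eps fw g sel phat k \<partial>K)
           \<ge> acc_victim D phat
             - tau * (1/2 + eps) *
               measure D {w \<in> space D. 1/2 - eps \<le> phat (fst w) \<and> phat (fst w) \<le> 1/2 + eps}
       \<and> (\<integral>k. acc_sampling_hard D eps fw g sel phat k \<partial>K)
           \<ge> (1 - tau) * acc_victim D phat
             + tau / (1 + 2 * eps) *
               (\<integral>w. 2 * (phat (fst w))\<^sup>2 - 2 * phat (fst w) + 1 \<partial>D)"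
proof -
  interpret watermark_setting X D K phat g sel eps tau
    using D_prob D_sets K_prob phat_meas phat_range calib eps_nonneg g_meas sel_meas tau_range(1) sel_prob
    by (rule watermark_setting.intro)
  show ?thesis
    by (intro conjI expected_acc_argmax_soft_ge expected_acc_sampling_hard_ge)
qed

end
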